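(* Let $k>1$ be an integer and let $\mathcal A_k$ be the pattern of $k$-term arithmetic progressions in $\mathbb R$. If $n$ is a positive integer and $r$ is the remainder when $n$ is divided by $k-1$, then \[ S_{\mathcal A_k}(n) = \frac{(n-r)(n+r-k+1)}{2k-2}. \]
   Context: $\mathcal A_k$ is the set of all subsets of $\mathbb R$ of the form $\{a, a+d, a+2d,\dots,a+(k-1)d\}$ with $a\in\mathbb R$, $d>0$. For finite $V\subseteq\mathbb R$, $S_{\mathcal A_k}(V)$ is the number of $P\in\mathcal A_k$ with $P\subseteq V$, and $S_{\mathcal A_k}(n)=\max\{S_{\mathcal A_k}(V): V\subseteq\mathbb R,\ |V|=n\}$. *)

theory Defs
  imports Complex_Main
begin

definition AP_pattern :: "nat \<Rightarrow> real set set" where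
  "AP_pattern k = {{a + real i * d | i. i < k} | a d. d > 0}"

definition S_AP_set :: "nat \<Rightarrow> real set \<Rightarrow> nat" where
  "S_AP_set k V = card {P \<in> AP_pattern k. P \<subseteq> V}"

definition S_AP :: "nat \<Rightarrow> nat \<Rightarrow> nat" where
  "S_AP k n = Max {S_AP_set k V | V. finite V \<and> card V = n}"

end

theory Submission
  imports Defs
begin

text \<open>
  Upper bound, by induction on \<open>k\<close>: let \<open>B\<close> consist of the \<open>b = \<lceil>n/(k-1)\<rceil>\<close> smallest points of
  an \<open>n\<close>-set \<open>V\<close>. A \<open>(k+1)\<close>-term progression in \<open>V\<close> either has its first two terms in \<open>B\<close>, and then
  is determined by them (at most \<open>b choose 2\<close> choices), or its last \<open>k\<close> terms form a \<open>k\<close>-term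
  progression in \<open>V - B\<close>, which again determines it. Lower bound: in \<open>{0, \<dots>, n-1}\<close> the
  \<open>k\<close>-term progressions ending in \<open>t\<close> are exactly those with difference \<open>d \<le> t/(k-1)\<close>, giving
  \<open>\<Sum>t<n. t div (k-1)\<close> progressions.
\<close>

definition arith_prog :: "real \<Rightarrow> real \<Rightarrow> nat \<Rightarrow> real set" where
  "arith_prog a d k = {a + real i * d | i. i < k}"

definition ap_params :: "nat \<Rightarrow> real set \<Rightarrow> (real \<times> real) set" where
  "ap_params k V = {(a, d). d > 0 \<and> arith_prog a d k \<subseteq> V}"

definition ap_bound :: "nat \<Rightarrow> nat \<Rightarrow> nat" where
  "ap_bound m n = (\<Sum>t<n. t div m)"

lemma arith_prog_memI: "i < k \<Longrightarrow> a + real i * d \<in> arith_prog a d k"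
  unfolding arith_prog_def by blast

lemma arith_prog_first: "0 < k \<Longrightarrow> a \<in> arith_prog a d k"
  using arith_prog_memI[of 0 k a d] by simp

lemma arith_prog_second: "1 < k \<Longrightarrow> a + d \<in> arith_prog a d k"
  using arith_prog_memI[of 1 k a d] by simp

lemma arith_prog_first_gap:
  assumes "x \<in> arith_prog a d k" "0 < d"
  shows "x = a \<or> a + d \<le> x"
proof -
  obtain i where "x = a + real i * d" using assms(1) unfolding arith_prog_def by auto
  then show ?thesis using assms(2) by (cases i) (auto simp: algebra_simps)
qed

lemma arith_prog_inj:
  assumes "2 \<le> k" "0 < d" "0 < d'" and eq: "arith_prog a d k = arith_prog a' d' k"
  shows "a = a' \<and> d = d'"
proof -
  have mem: "a \<in> arith_prog a' d' k" "a' \<in> arith_prog a d k"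
    "a + d \<in> arith_prog a' d' k" "a' + d' \<in> arith_prog a d k"
    using assms(1) arith_prog_first arith_prog_second eq by auto
  have "a = a'"
    using arith_prog_first_gap[OF mem(1)] arith_prog_first_gap[OF mem(2)] assms(2,3) by force
  then show ?thesis
    using arith_prog_first_gap[OF mem(3)] arith_prog_first_gap[OF mem(4)] assms(2,3) by force
qed

lemma S_AP_set_eq_card_ap_params:
  assumes "2 \<le> k"
  shows "S_AP_set k V = card (ap_params k V)"
proof -
  have "{P \<in> AP_pattern k. P \<subseteq> V} = (\<lambda>(a, d). arith_prog a d k) ` ap_params k V"
    unfolding AP_pattern_def ap_params_def arith_prog_def by auto
  moreover have "inj_on (\<lambda>(a, d). arith_prog a d k) (ap_params k V)"
    using arith_prog_inj[OF assms] unfolding inj_on_def ap_params_def by auto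
  ultimately show ?thesis
    unfolding S_AP_set_def by (simp add: card_image)
qed

lemma finite_ap_params:
  assumes "2 \<le> k" "finite V"
  shows "finite (ap_params k V)"
proof -
  have "ap_params k V \<subseteq> (\<lambda>(x, y). (x, y - x)) ` (V \<times> V)"
  proof
    fix p assume p: "p \<in> ap_params k V"
    obtain a d where p_eq: "p = (a, d)" by (cases p)
    have "a \<in> V" "a + d \<in> V"
      using p p_eq assms(1) arith_prog_first[of k a d] arith_prog_second[of k a d]
      unfolding ap_params_def by auto
    then show "p \<in> (\<lambda>(x, y). (x, y - x)) ` (V \<times> V)"
      using p_eq by (auto intro!: image_eqI[of _ _ "(a, a + d)"])
  qed
  then show ?thesis
    using assms(2) by (meson finite_SigmaI finite_imageI finite_subset)
qed

lemma ap_params_mono: "V \<subseteq> W \<Longrightarrow> ap_params k V \<subseteq> ap_params k W"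
  unfolding ap_params_def by auto

subsection \<open>The upper bound\<close>

lemma obtain_initial_segment:
  fixes V :: "'a::linorder set"
  assumes "finite V" "b \<le> card V"
  obtains B where "B \<subseteq> V" "card B = b" "\<And>x y. x \<in> B \<Longrightarrow> y \<in> V \<Longrightarrow> y \<le> x \<Longrightarrow> y \<in> B"
proof -
  have "\<exists>B\<subseteq>V. card B = b \<and> (\<forall>x\<in>B. \<forall>y\<in>V. y \<le> x \<longrightarrow> y \<in> B)"
    using assms(2)
  proof (induction b)
    case 0
    show ?case by (intro exI[of _ "{}"]) auto
  next
    case (Suc b)
    then obtain B where B: "B \<subseteq> V" "card B = b" "\<forall>x\<in>B. \<forall>y\<in>V. y \<le> x \<longrightarrow> y \<in> B"
      using Suc_leD by blast
    have fin_rest: "finite (V - B)" using assms(1) by blast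
    have "B \<noteq> V" using B(2) Suc.prems by auto
    then have rest_ne: "V - B \<noteq> {}" using B(1) by blast
    define x where "x = Min (V - B)"
    have x: "x \<in> V - B" "\<And>y. y \<in> V - B \<Longrightarrow> x \<le> y"
      using Min_in[OF fin_rest rest_ne] Min_le[OF fin_rest] unfolding x_def by auto
    have "card (insert x B) = Suc b"
      using x(1) B(2) finite_subset[OF B(1) assms(1)] by simp
    moreover have "\<forall>z\<in>insert x B. \<forall>y\<in>V. y \<le> z \<longrightarrow> y \<in> insert x B"
    proof (intro ballI impI)
      fix z y assume "z \<in> insert x B" "y \<in> V" "y \<le> z"
      show "y \<in> insert x B"
      proof (cases "y \<in> B")
        case False
        then have "x \<le> y" using x(2) \<open>y \<in> V\<close> by blast
        then show ?thesis using \<open>z \<in> insert x B\<close> \<open>y \<le> z\<close> B(3) \<open>y \<in> V\<close> by auto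
      qed simp
    qed
    ultimately show ?case using B(1) x(1) by (intro exI[of _ "insert x B"]) auto
  qed
  then show ?thesis using that by blast
qed

lemma card_ap_params_two_le:
  assumes "finite B"
  shows "card (ap_params 2 B) \<le> card B choose 2"
proof -
  let ?pair = "\<lambda>(a, d). {a, a + d}"
  have "inj_on ?pair (ap_params 2 B)"
  proof (rule inj_onI)
    fix p p' assume "p \<in> ap_params 2 B" "p' \<in> ap_params 2 B" "?pair p = ?pair p'"
    then show "p = p'"
      unfolding ap_params_def by (auto simp: doubleton_eq_iff)
  qed
  moreover have "?pair ` ap_params 2 B \<subseteq> {S. S \<subseteq> B \<and> card S = 2}"
  proof
    fix S assume "S \<in> ?pair ` ap_params 2 B"
    then obtain a d where ad: "(a, d) \<in> ap_params 2 B" "S = {a, a + d}" by auto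
    then have "a \<in> B" "a + d \<in> B" "d > 0"
      using arith_prog_first[of 2 a d] arith_prog_second[of 2 a d]
      unfolding ap_params_def by auto
    then show "S \<in> {S. S \<subseteq> B \<and> card S = 2}" using ad by auto
  qed
  ultimately have "card (ap_params 2 B) \<le> card {S. S \<subseteq> B \<and> card S = 2}"
    using assms by (intro card_inj_on_le) auto
  also have "\<dots> = card B choose 2"
    using n_subsets[OF assms] by simp
  finally show ?thesis .
qed

lemma ap_params_Suc_subset:
  assumes "2 \<le> k" "B \<subseteq> V" and down: "\<And>x y. x \<in> B \<Longrightarrow> y \<in> V \<Longrightarrow> y \<le> x \<Longrightarrow> y \<in> B"
  shows "ap_params (Suc k) V \<subseteq> ap_params 2 B \<union> (\<lambda>(x, d). (x - d, d)) ` ap_params k (V - B)"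
proof
  fix p assume p: "p \<in> ap_params (Suc k) V"
  obtain a d where p_eq: "p = (a, d)" by (cases p)
  have d: "d > 0" and prog: "arith_prog a d (Suc k) \<subseteq> V"
    using p p_eq unfolding ap_params_def by auto
  have "a \<in> V" and "a + d \<in> V"
    using prog assms(1) arith_prog_first[of "Suc k" a d] arith_prog_second[of "Suc k" a d] by auto
  show "p \<in> ap_params 2 B \<union> (\<lambda>(x, d). (x - d, d)) ` ap_params k (V - B)"
  proof (cases "a + d \<in> B")
    case True
    then have "a \<in> B" using down \<open>a \<in> V\<close> d by simp
    moreover have "arith_prog a d 2 = {a, a + d}"
      unfolding arith_prog_def by (auto simp: less_2_cases_iff)
    ultimately show ?thesis using True p_eq d unfolding ap_params_def by auto
  next
    case False
    have "arith_prog (a + d) d k \<subseteq> V - B"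
    proof
      fix x assume "x \<in> arith_prog (a + d) d k"
      then obtain i where i: "i < k" "x = a + real (Suc i) * d"
        unfolding arith_prog_def by (auto simp: algebra_simps)
      then have "x \<in> V" using prog arith_prog_memI[of "Suc i" "Suc k" a d] by auto
      moreover have "a + d \<le> x" using i d by simp
      ultimately show "x \<in> V - B" using False down \<open>a + d \<in> V\<close> by auto
    qed
    then have "(a + d, d) \<in> ap_params k (V - B)" using d unfolding ap_params_def by simp
    then show ?thesis using p_eq by (auto intro!: image_eqI[of _ _ "(a + d, d)"])
  qed
qed

lemma double_choose_two: "2 * (n choose 2) + n = n * n"
  by (induction n) (auto simp: numeral_2_eq_2 algebra_simps)

lemma ap_bound_add:
  "ap_bound m (n + l) = ap_bound m n + (\<Sum>t\<in>{n..<n + l}. t div m)"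
  unfolding ap_bound_def lessThan_atLeast0 by (rule sum.atLeastLessThan_concat[symmetric]) auto

lemma sum_div_block:
  fixes l m q :: nat
  assumes "l \<le> m"
  shows "(\<Sum>t\<in>{q * m..<q * m + l}. t div m) = l * q"
proof -
  have "(\<Sum>t\<in>{q * m..<q * m + l}. t div m) = (\<Sum>t\<in>{q * m..<q * m + l}. q)"
  proof (rule sum.cong[OF refl])
    fix t assume "t \<in> {q * m..<q * m + l}"
    then have "m * q \<le> t" "t < m * Suc q" using assms by (auto simp: algebra_simps)
    then show "t div m = q" by (rule div_nat_eqI)
  qed
  then show ?thesis by simp
qed

lemma ap_bound_mult:
  assumes "0 < m"
  shows "2 * ap_bound m (q * m) + m * q = m * q * q"
proof (induction q)
  case 0
  then show ?case by (simp add: ap_bound_def)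
next
  case (Suc q)
  have "ap_bound m (Suc q * m) = ap_bound m (q * m) + m * q"
    using ap_bound_add[of m "q * m" m] sum_div_block[of m m q] by (simp add: add.commute)
  with Suc show ?case by (simp add: algebra_simps)
qed

lemma ap_bound_closed_form:
  assumes "0 < m"
  shows "2 * ap_bound m n + m * (n div m) = m * (n div m) * (n div m) + 2 * (n div m) * (n mod m)"
proof -
  define q r where "q = n div m" and "r = n mod m"
  have n: "n = q * m + r" and "r < m" using assms by (simp_all add: q_def r_def)
  have "ap_bound m n = ap_bound m (q * m) + r * q"
    using ap_bound_add[of m "q * m" r] sum_div_block[of r m q] \<open>r < m\<close> n by simp
  with ap_bound_mult[OF assms, of q] show ?thesis
    unfolding q_def[symmetric] r_def[symmetric] by (simp add: algebra_simps)
qed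

lemma ap_bound_one: "ap_bound 1 n = n choose 2"
  using ap_bound_closed_form[of 1 n] double_choose_two[of n] by simp

text \<open>With \<open>b = \<lceil>n/(m+1)\<rceil>\<close> the split in the induction step loses nothing.\<close>
lemma ap_bound_Suc_split:
  fixes m n :: nat
  assumes "0 < m"
  defines "b \<equiv> (n + m) div Suc m"
  shows "(b choose 2) + ap_bound m (n - b) \<le> ap_bound (Suc m) n"
proof -
  define q r where "q = n div Suc m" and "r = n mod Suc m"
  have n: "n = q * Suc m + r" and "r < Suc m"
    unfolding q_def r_def by (metis div_mult_mod_eq) simp
  have closed_Suc: "2 * ap_bound (Suc m) n + Suc m * q = Suc m * q * q + 2 * q * r"
    using ap_bound_closed_form[of "Suc m" n] unfolding q_def r_def by simp
  show ?thesis
  proof (cases "r = 0")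
    case True
    have "Suc m * q \<le> n + m" "n + m < Suc m * Suc q" using True n by simp_all
    then have "b = q" unfolding b_def by (rule div_nat_eqI)
    then have "n - b = q * m" using True n by simp
    then show ?thesis
      using \<open>b = q\<close> ap_bound_mult[OF assms(1), of q] double_choose_two[of q] closed_Suc True
      by (simp add: algebra_simps)
  next
    case False
    have "Suc m * Suc q \<le> n + m" "n + m < Suc m * Suc (Suc q)"
      using False \<open>r < Suc m\<close> n by simp_all
    then have "b = Suc q" unfolding b_def by (rule div_nat_eqI)
    then have "n - b = q * m + (r - 1)" using False n by simp
    have "r - 1 < m" using False \<open>r < Suc m\<close> by simp
    then have "m * q \<le> q * m + (r - 1)" "q * m + (r - 1) < m * Suc q"
      by (simp_all add: mult.commute)
    then have "(q * m + (r - 1)) div m = q" by (rule div_nat_eqI)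
    moreover have "(q * m + (r - 1)) mod m = r - 1"
      using \<open>r - 1 < m\<close> by (metis mod_less mod_mult_self3)
    ultimately have "2 * ap_bound m (n - b) + m * q = m * q * q + 2 * q * (r - 1)"
      using ap_bound_closed_form[OF assms(1), of "q * m + (r - 1)"] \<open>n - b = q * m + (r - 1)\<close>
      by simp
    then show ?thesis
      using \<open>b = Suc q\<close> double_choose_two[of "Suc q"] closed_Suc False
      by (cases r) (simp_all add: algebra_simps)
  qed
qed

lemma card_ap_params_le_ap_bound:
  "0 < m \<Longrightarrow> finite V \<Longrightarrow> card (ap_params (Suc m) V) \<le> ap_bound m (card V)"
proof (induction m arbitrary: V rule: nat_induct_non_zero)
  case 1
  then show ?case using card_ap_params_two_le[of V] ap_bound_one by (simp add: numeral_2_eq_2)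
next
  case (Suc m)
  define n b where "n = card V" and "b = (n + m) div Suc m"
  have "n + m < Suc n * Suc m" by simp
  then have "b < Suc n" unfolding b_def by (rule less_mult_imp_div_less)
  then obtain B where B: "B \<subseteq> V" "card B = b"
    and down: "\<And>x y. x \<in> B \<Longrightarrow> y \<in> V \<Longrightarrow> y \<le> x \<Longrightarrow> y \<in> B"
    using obtain_initial_segment[OF Suc.prems] n_def less_Suc_eq_le by blast
  have "finite B" "finite (V - B)" using B(1) Suc.prems finite_subset by auto
  have card_rest: "card (V - B) = n - b" using B \<open>finite B\<close> n_def by (simp add: card_Diff_subset)
  have "2 \<le> Suc m" using Suc.hyps by simp
  let ?shift = "(\<lambda>(x, d). (x - d, d)) ` ap_params (Suc m) (V - B)"
  have "card (ap_params (Suc (Suc m)) V) \<le> card (ap_params 2 B \<union> ?shift)"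
    using ap_params_Suc_subset[OF \<open>2 \<le> Suc m\<close> B(1) down] finite_ap_params[of 2 B]
      finite_ap_params[OF \<open>2 \<le> Suc m\<close> \<open>finite (V - B)\<close>] \<open>finite B\<close>
    by (intro card_mono) auto
  also have "\<dots> \<le> card (ap_params 2 B) + card (ap_params (Suc m) (V - B))"
    using card_Un_le card_image_le[OF finite_ap_params[OF \<open>2 \<le> Suc m\<close> \<open>finite (V - B)\<close>]]
    by (meson add_left_mono le_trans)
  also have "\<dots> \<le> (b choose 2) + ap_bound m (n - b)"
    using card_ap_params_two_le[OF \<open>finite B\<close>] B(2) Suc.IH[OF \<open>finite (V - B)\<close>] card_rest
    by (intro add_mono) auto
  also have "\<dots> \<le> ap_bound (Suc m) n"
    unfolding b_def by (rule ap_bound_Suc_split[OF Suc.hyps])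
  finally show ?case unfolding n_def .
qed

subsection \<open>The lower bound\<close>

text \<open>The progressions in \<open>{0, \<dots>, n}\<close> ending in \<open>n\<close> are new, and there are \<open>n div m\<close> of them.\<close>
lemma ap_bound_le_card_ap_params_range:
  "0 < m \<Longrightarrow> ap_bound m n \<le> card (ap_params (Suc m) (real ` {0..<n}))"
proof (induction n)
  case 0
  then show ?case by (simp add: ap_bound_def)
next
  case (Suc n)
  define V W where "V = real ` {0..<n}" and "W = real ` {0..<Suc n}"
  define ending where "ending = (\<lambda>d::nat. (real n - real m * real d, real d)) ` {1..n div m}"
  have fin: "finite (ap_params (Suc m) W)"
    using finite_ap_params[of "Suc m" W] Suc.prems unfolding W_def by simp
  have old: "ap_params (Suc m) V \<subseteq> ap_params (Suc m) W"
    unfolding V_def W_def by (rule ap_params_mono) auto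
  have new: "ending \<subseteq> ap_params (Suc m) W"
  proof
    fix p assume "p \<in> ending"
    then obtain d where d: "1 \<le> d" "d \<le> n div m" "p = (real n - real m * real d, real d)"
      unfolding ending_def by auto
    have "m * d \<le> n" using d(2) Suc.prems by (simp add: less_eq_div_iff_mult_less_eq mult.commute)
    have "arith_prog (real n - real m * real d) (real d) (Suc m) \<subseteq> W"
    proof
      fix x assume "x \<in> arith_prog (real n - real m * real d) (real d) (Suc m)"
      then obtain i where i: "i < Suc m" "x = real n - real m * real d + real i * real d"
        unfolding arith_prog_def by auto
      have "(m - i) * d \<le> n" using \<open>m * d \<le> n\<close> by (meson diff_le_self le_trans mult_le_mono1)
      then have "x = real (n - (m - i) * d)"
        using i by (simp add: of_nat_diff algebra_simps)
      then show "x \<in> W" unfolding W_def by auto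
    qed
    then show "p \<in> ap_params (Suc m) W" using d unfolding ap_params_def by auto
  qed
  have disjoint: "ap_params (Suc m) V \<inter> ending = {}"
  proof (rule ccontr)
    assume "ap_params (Suc m) V \<inter> ending \<noteq> {}"
    then obtain d where "(real n - real m * real d, real d) \<in> ap_params (Suc m) V"
      unfolding ending_def by auto
    then have "real n \<in> V"
      using arith_prog_memI[of m "Suc m" "real n - real m * real d" "real d"]
      unfolding ap_params_def by auto
    then show False unfolding V_def by auto
  qed
  have "card ending = n div m"
    unfolding ending_def by (subst card_image) (auto intro: inj_onI)
  then have "ap_bound m (Suc n) \<le> card (ap_params (Suc m) V) + card ending"
    using Suc unfolding V_def ap_bound_def by simp
  also have "\<dots> = card (ap_params (Suc m) V \<union> ending)"
    using disjoint fin old new by (simp add: card_Un_disjoint finite_subset)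
  also have "\<dots> \<le> card (ap_params (Suc m) W)"
    using old new fin by (intro card_mono) auto
  finally show ?case unfolding W_def .
qed

lemma S_AP_eq_ap_bound:
  assumes "0 < m"
  shows "S_AP (Suc m) n = ap_bound m n"
proof -
  have "2 \<le> Suc m" using assms by simp
  let ?X = "{S_AP_set (Suc m) V | V. finite V \<and> card V = n}"
  have upper: "\<forall>y\<in>?X. y \<le> ap_bound m n"
    using card_ap_params_le_ap_bound[OF assms] S_AP_set_eq_card_ap_params[OF \<open>2 \<le> Suc m\<close>] by auto
  define V where "V = real ` {0..<n}"
  have "finite V" "card V = n" unfolding V_def by (simp_all add: card_image)
  moreover have "S_AP_set (Suc m) V = ap_bound m n"
    using card_ap_params_le_ap_bound[OF assms \<open>finite V\<close>] ap_bound_le_card_ap_params_range[OF assms]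
      S_AP_set_eq_card_ap_params[OF \<open>2 \<le> Suc m\<close>] \<open>card V = n\<close> unfolding V_def by (simp add: le_antisym)
  ultimately have "ap_bound m n \<in> ?X" by force
  moreover have "finite ?X"
    using upper by (meson finite_atMost finite_subset atMost_iff subsetI)
  ultimately show ?thesis
    unfolding S_AP_def using upper by (intro Max_eqI) auto
qed

theorem theorem2:
  fixes k n :: nat
  assumes "k > 1" and "n > 0"
  defines "r \<equiv> n mod (k - 1)"
  shows "real (S_AP k n) = (real n - real r) * (real n + real r - real k + 1) / (2 * real k - 2)"
proof -
  define m q where "m = k - 1" and "q = n div m"
  have "0 < m" "k = Suc m" "r = n mod m" using assms(1) unfolding m_def r_def by auto
  have "2 * ap_bound m n + m * q = m * q * q + 2 * q * r"
    using ap_bound_closed_form[OF \<open>0 < m\<close>, of n] unfolding q_def \<open>r = n mod m\<close> by simp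
  then have "2 * real (ap_bound m n) + real m * real q = real m * real q * real q + 2 * real q * real r"
    using arg_cong[where f = real] by fastforce
  then have "real (ap_bound m n) = (real m * real q * real q + 2 * real q * real r - real m * real q) / 2"
    by simp
  also have "\<dots> = (real n - real r) * (real n + real r - real k + 1) / (2 * real k - 2)"
  proof -
    have "real n = real q * real m + real r"
      unfolding q_def \<open>r = n mod m\<close> by (metis of_nat_add of_nat_mult div_mult_mod_eq)
    moreover have "real k = real m + 1" using \<open>k = Suc m\<close> by simp
    ultimately show ?thesis using \<open>0 < m\<close> by (simp add: field_simps)
  qed
  finally show ?thesis
    using S_AP_eq_ap_bound[OF \<open>0 < m\<close>] \<open>k = Suc m\<close> by simp
qed

end
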